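(* Let $\mathcal{X}=\{v_1,\dots,v_N\}$ be the node set of a soft tree, i.e. a directed graph whose adjacency matrix $A\in[0,1]^{N\times N}$ is strictly upper triangular and satisfies $A^\top 1_N=(0,1,\dots,1)^\top$, with leaf set $\mathcal{X}_{\rm leaf}$, and let $w=(w_v)_{v\in\mathcal{X}}$ be positive weights. Then the relaxed Tree-Wasserstein distance $W^{\rm relax}_{d_\mathcal{X}}$ is a metric on the set of probability measures supported on $\mathcal{X}_{\rm leaf}$. Moreover, when $A\in\{0,1\}^{N\times N}$ (so that $\mathcal{X}$ is a directed rooted tree with root $v_1$), $W^{\rm relax}_{d_\mathcal{X}}(\mu,\nu)$ equals the Tree-Wasserstein distance, i.e. the 1-Wasserstein distance between $\mu$ and $\nu$ with respect to the tree metric $d_\mathcal{X}$ in which the edge whose deeper endpoint is $v$ has length $w_v$; equivalently $W^{\rm relax}_{d_\mathcal{X}}(\mu,\nu)=\sum_{v\in\mathcal{X}}w_v|\mu(\Gamma(v))-\nu(\Gamma(v))|$, where $\Gamma(v)$ is the set of nodes in the subtree rooted at $v$.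
   Context: As in the setting of SEAL, the nodes are ordered with latent (internal) labels first and observed labels last, $A=\begin{pmatrix}A_1&A_2\\0&0\end{pmatrix}$, and the observed labels form the leaf set $\mathcal{X}_{\rm leaf}$. Set $\alpha=(I-A)^{-1}=\sum_{k\ge0}A^k$ with entries $\alpha_{vx}$. For probability measures $\mu,\nu$ supported on $\mathcal{X}_{\rm leaf}$, the relaxed Tree-Wasserstein distance is $W^{\rm relax}_{d_\mathcal{X}}(\mu,\nu)=\sum_{v\in\mathcal{X}} w_v\left|\sum_{x\in\mathcal{X}_{\rm leaf}}\alpha_{vx}(\mu(x)-\nu(x))\right|$. The tree metric $d_\mathcal{X}(a,b)$ is the length (sum of edge weights) of the path between $a$ and $b$, and the 1-Wasserstein distance is $\min_{\pi\in\Pi(\mu,\nu)}\sum_{a,b} d_\mathcal{X}(a,b)\pi(a,b)$ over couplings $\pi$ of $\mu,\nu$. *)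

theory Defs
  imports Complex_Main
begin

text \<open>Nodes are 0,...,N-1 (node 0 is v_1, the root). Latent nodes are 0,...,M-1,
  observed labels (leaves) are M,...,N-1. Matrices are functions nat => nat => real,
  only entries with indices below N are relevant.\<close>

definition leaf_set :: "nat \<Rightarrow> nat \<Rightarrow> nat set" where
  "leaf_set N M = {M..<N}"

definition soft_tree :: "nat \<Rightarrow> nat \<Rightarrow> (nat \<Rightarrow> nat \<Rightarrow> real) \<Rightarrow> bool" where
  "soft_tree N M A \<longleftrightarrow>
     M \<le> N
   \<and> (\<forall>i<N. \<forall>j<N. 0 \<le> A i j \<and> A i j \<le> 1)
   \<and> (\<forall>i<N. \<forall>j<N. j \<le> i \<longrightarrow> A i j = 0)
   \<and> (\<Sum>i<N. A i 0) = 0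
   \<and> (\<forall>j. 1 \<le> j \<and> j < N \<longrightarrow> (\<Sum>i<N. A i j) = 1)
   \<and> (\<forall>i. M \<le> i \<and> i < N \<longrightarrow> (\<forall>j<N. A i j = 0))"

definition mat_mult :: "nat \<Rightarrow> (nat \<Rightarrow> nat \<Rightarrow> real) \<Rightarrow> (nat \<Rightarrow> nat \<Rightarrow> real) \<Rightarrow> nat \<Rightarrow> nat \<Rightarrow> real" where
  "mat_mult N A B i j = (\<Sum>k<N. A i k * B k j)"

fun mat_pow :: "nat \<Rightarrow> (nat \<Rightarrow> nat \<Rightarrow> real) \<Rightarrow> nat \<Rightarrow> nat \<Rightarrow> nat \<Rightarrow> real" where
  "mat_pow N A 0 = (\<lambda>i j. if i = j then 1 else 0)"
| "mat_pow N A (Suc k) = mat_mult N (mat_pow N A k) A"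

text \<open>alpha = (I - A)^{-1} = sum_{k >= 0} A^k\<close>
definition alpha :: "nat \<Rightarrow> (nat \<Rightarrow> nat \<Rightarrow> real) \<Rightarrow> nat \<Rightarrow> nat \<Rightarrow> real" where
  "alpha N A v x = (\<Sum>k. mat_pow N A k v x)"

definition W_relax :: "nat \<Rightarrow> nat \<Rightarrow> (nat \<Rightarrow> real) \<Rightarrow> (nat \<Rightarrow> nat \<Rightarrow> real)
    \<Rightarrow> (nat \<Rightarrow> real) \<Rightarrow> (nat \<Rightarrow> real) \<Rightarrow> real" where
  "W_relax N M w A \<mu> \<nu> =
     (\<Sum>v<N. w v * \<bar>\<Sum>x\<in>leaf_set N M. alpha N A v x * (\<mu> x - \<nu> x)\<bar>)"

definition leaf_probs :: "nat \<Rightarrow> nat \<Rightarrow> (nat \<Rightarrow> real) set" where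
  "leaf_probs N M = {\<mu>. (\<forall>x. 0 \<le> \<mu> x) \<and> (\<forall>x. x \<notin> leaf_set N M \<longrightarrow> \<mu> x = 0)
                        \<and> (\<Sum>x\<in>leaf_set N M. \<mu> x) = 1}"

definition metric_on :: "'a set \<Rightarrow> ('a \<Rightarrow> 'a \<Rightarrow> real) \<Rightarrow> bool" where
  "metric_on S d \<longleftrightarrow>
     (\<forall>x\<in>S. \<forall>y\<in>S. 0 \<le> d x y)
   \<and> (\<forall>x\<in>S. \<forall>y\<in>S. d x y = 0 \<longleftrightarrow> x = y)
   \<and> (\<forall>x\<in>S. \<forall>y\<in>S. d x y = d y x)
   \<and> (\<forall>x\<in>S. \<forall>y\<in>S. \<forall>z\<in>S. d x z \<le> d x y + d y z)"

text \<open>Tree case (A with 0/1 entries): edges (i,j) with A i j = 1; the edge whose deeper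
  endpoint is v has length w v.\<close>
definition tree_edges :: "nat \<Rightarrow> (nat \<Rightarrow> nat \<Rightarrow> real) \<Rightarrow> (nat \<times> nat) set" where
  "tree_edges N A = {(i, j). i < N \<and> j < N \<and> A i j = 1}"

definition edge_len :: "(nat \<Rightarrow> nat \<Rightarrow> real) \<Rightarrow> (nat \<Rightarrow> real) \<Rightarrow> nat \<Rightarrow> nat \<Rightarrow> real" where
  "edge_len A w u v = (if A u v = 1 then w v else w u)"

definition simple_path :: "nat \<Rightarrow> (nat \<Rightarrow> nat \<Rightarrow> real) \<Rightarrow> nat \<Rightarrow> nat \<Rightarrow> nat list \<Rightarrow> bool" where
  "simple_path N A a b ps \<longleftrightarrow>
     ps \<noteq> [] \<and> hd ps = a \<and> last ps = b \<and> distinct ps \<and> set ps \<subseteq> {..<N}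
   \<and> (\<forall>i. Suc i < length ps \<longrightarrow>
         (ps ! i, ps ! Suc i) \<in> tree_edges N A \<or> (ps ! Suc i, ps ! i) \<in> tree_edges N A)"

definition path_len :: "(nat \<Rightarrow> nat \<Rightarrow> real) \<Rightarrow> (nat \<Rightarrow> real) \<Rightarrow> nat list \<Rightarrow> real" where
  "path_len A w ps = (\<Sum>i<length ps - 1. edge_len A w (ps ! i) (ps ! Suc i))"

definition tree_dist :: "nat \<Rightarrow> (nat \<Rightarrow> nat \<Rightarrow> real) \<Rightarrow> (nat \<Rightarrow> real) \<Rightarrow> nat \<Rightarrow> nat \<Rightarrow> real" where
  "tree_dist N A w a b = Min {path_len A w ps | ps. simple_path N A a b ps}"

definition couplings :: "nat \<Rightarrow> (nat \<Rightarrow> real) \<Rightarrow> (nat \<Rightarrow> real) \<Rightarrow> (nat \<Rightarrow> nat \<Rightarrow> real) set" where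
  "couplings N \<mu> \<nu> = {\<pi>. (\<forall>a<N. \<forall>b<N. 0 \<le> \<pi> a b)
                        \<and> (\<forall>a<N. (\<Sum>b<N. \<pi> a b) = \<mu> a)
                        \<and> (\<forall>b<N. (\<Sum>a<N. \<pi> a b) = \<nu> b)}"

definition wasserstein1 :: "nat \<Rightarrow> (nat \<Rightarrow> nat \<Rightarrow> real) \<Rightarrow> (nat \<Rightarrow> real) \<Rightarrow> (nat \<Rightarrow> real) \<Rightarrow> real" where
  "wasserstein1 N d \<mu> \<nu> =
     Inf {(\<Sum>a<N. \<Sum>b<N. d a b * \<pi> a b) | \<pi>. \<pi> \<in> couplings N \<mu> \<nu>}"

definition subtree :: "nat \<Rightarrow> (nat \<Rightarrow> nat \<Rightarrow> real) \<Rightarrow> nat \<Rightarrow> nat set" where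
  "subtree N A v = {x. x < N \<and> (v, x) \<in> (tree_edges N A)\<^sup>*}"

end

theory Submission
  imports Defs
begin

text \<open>Since \<open>A\<close> is strictly upper triangular, its powers vanish from order \<open>N\<close> on, so
  \<open>\<alpha>\<close> is a finite sum with \<open>\<alpha> = I + \<alpha> A\<close>. The rows of \<open>\<alpha>\<close> at the leaves are unit vectors, so
  \<open>W_relax\<close>, a positively weighted 1-norm of \<open>\<alpha> (\<mu> - \<nu>)\<close>, separates leaf measures.

  For a 0/1 matrix every node but the root has exactly one parent, which has a smaller label,
  and \<open>\<alpha> v x\<close> is the indicator of \<open>x \<in> \<Gamma>(v)\<close>; hence \<open>W_relax\<close> is the flow cost
  \<open>\<Sum>\<^sub>v w\<^sub>v \<bar>\<mu>(\<Gamma>(v)) - \<nu>(\<Gamma>(v))\<bar>\<close>. The tree metric is the cut metric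
  \<open>d(a, b) = \<Sum>\<^sub>v w\<^sub>v \<bar>[a \<in> \<Gamma>(v)] - [b \<in> \<Gamma>(v)]\<bar>\<close>: every path is at least as long by the
  triangle inequality, and walking up through parents attains it. Every coupling costs at least
  the flow cost, since it must move at least \<open>\<bar>\<mu>(\<Gamma>(v)) - \<nu>(\<Gamma>(v))\<bar>\<close> across the edge above
  \<open>v\<close>, and a coupling attaining it is built one node at a time.\<close>

lemma weighted_abs_sum_eq_0_imp_eq:
  fixes c :: "nat \<Rightarrow> 'a \<Rightarrow> real"
  assumes w: "\<forall>v<N. 0 < w v" and X: "finite X"
    and unit_rows: "\<forall>x\<in>X. \<exists>v<N. \<forall>y\<in>X. c v y = of_bool (y = x)"
    and support: "\<forall>x. x \<notin> X \<longrightarrow> \<mu> x = 0 \<and> \<nu> x = 0"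
    and zero: "(\<Sum>v<N. w v * \<bar>\<Sum>x\<in>X. c v x * (\<mu> x - \<nu> x)\<bar>) = 0"
  shows "\<mu> = \<nu>"
proof
  fix x
  show "\<mu> x = \<nu> x"
  proof (cases "x \<in> X")
    case True
    then obtain v where v: "v < N" "\<forall>y\<in>X. c v y = of_bool (y = x)"
      using unit_rows by blast
    have "\<forall>u\<in>{..<N}. w u * \<bar>\<Sum>y\<in>X. c u y * (\<mu> y - \<nu> y)\<bar> = 0"
      using zero w by (subst (asm) sum_nonneg_eq_0_iff) (simp_all add: less_imp_le)
    then have "\<bar>\<Sum>y\<in>X. c v y * (\<mu> y - \<nu> y)\<bar> = 0"
      using v(1) w by force
    moreover have "(\<Sum>y\<in>X. c v y * (\<mu> y - \<nu> y)) = \<mu> x - \<nu> x"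
      using v(2) True X by (simp add: if_distrib cong: sum.cong)
    ultimately show ?thesis by simp
  next
    case False
    then show ?thesis using support by simp
  qed
qed

lemma metric_on_weighted_abs_sum:
  fixes c :: "nat \<Rightarrow> 'a \<Rightarrow> real"
  assumes w: "\<forall>v<N. 0 < w v" and X: "finite X"
    and unit_rows: "\<forall>x\<in>X. \<exists>v<N. \<forall>y\<in>X. c v y = of_bool (y = x)"
    and support: "\<forall>\<mu>\<in>P. \<forall>x. x \<notin> X \<longrightarrow> \<mu> x = 0"
  shows "metric_on P (\<lambda>\<mu> \<nu>. \<Sum>v<N. w v * \<bar>\<Sum>x\<in>X. c v x * (\<mu> x - \<nu> x)\<bar>)"
proof -
  define L where "L v \<mu> \<nu> = (\<Sum>x\<in>X. c v x * (\<mu> x - \<nu> x))" for v and \<mu> \<nu> :: "'a \<Rightarrow> real"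
  have L_swap: "L v \<nu> \<mu> = - L v \<mu> \<nu>" for v \<mu> \<nu>
    unfolding L_def by (simp add: algebra_simps flip: sum_negf)
  have L_trans: "L v \<mu> \<rho> = L v \<mu> \<nu> + L v \<nu> \<rho>" for v \<mu> \<nu> \<rho>
    unfolding L_def by (simp add: algebra_simps flip: sum.distrib)
  have w_nonneg: "v \<in> {..<N} \<Longrightarrow> 0 \<le> w v" for v
    using w by (simp add: less_imp_le)
  have "metric_on P (\<lambda>\<mu> \<nu>. \<Sum>v<N. w v * \<bar>L v \<mu> \<nu>\<bar>)"
    unfolding metric_on_def
  proof (intro conjI ballI)
    fix \<mu> \<nu> \<rho>
    show "0 \<le> (\<Sum>v<N. w v * \<bar>L v \<mu> \<nu>\<bar>)"
      using w_nonneg by (intro sum_nonneg) simp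
    show "(\<Sum>v<N. w v * \<bar>L v \<mu> \<nu>\<bar>) = (\<Sum>v<N. w v * \<bar>L v \<nu> \<mu>\<bar>)"
      by (simp add: L_swap[of _ \<nu> \<mu>])
    show "(\<Sum>v<N. w v * \<bar>L v \<mu> \<rho>\<bar>) \<le> (\<Sum>v<N. w v * \<bar>L v \<mu> \<nu>\<bar>) + (\<Sum>v<N. w v * \<bar>L v \<nu> \<rho>\<bar>)"
      unfolding L_trans[of _ \<mu> \<rho> \<nu>] sum.distrib[symmetric] distrib_left[symmetric]
      using w_nonneg by (intro sum_mono mult_left_mono abs_triangle_ineq) auto
    assume "\<mu> \<in> P" "\<nu> \<in> P"
    then show "(\<Sum>v<N. w v * \<bar>L v \<mu> \<nu>\<bar>) = 0 \<longleftrightarrow> \<mu> = \<nu>"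
      using weighted_abs_sum_eq_0_imp_eq[OF w X unit_rows, of \<mu> \<nu>] support by (auto simp: L_def)
  qed
  then show ?thesis unfolding L_def .
qed

lemma soft_tree_nonneg: "soft_tree N M A \<Longrightarrow> i < N \<Longrightarrow> j < N \<Longrightarrow> 0 \<le> A i j"
  unfolding soft_tree_def by blast

lemma soft_tree_strictly_upper: "soft_tree N M A \<Longrightarrow> i < N \<Longrightarrow> j < N \<Longrightarrow> j \<le> i \<Longrightarrow> A i j = 0"
  unfolding soft_tree_def by blast

lemma soft_tree_column_sum: "soft_tree N M A \<Longrightarrow> 1 \<le> j \<Longrightarrow> j < N \<Longrightarrow> (\<Sum>i<N. A i j) = 1"
  unfolding soft_tree_def by blast

lemma soft_tree_leaf_row: "soft_tree N M A \<Longrightarrow> M \<le> i \<Longrightarrow> i < N \<Longrightarrow> j < N \<Longrightarrow> A i j = 0"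
  unfolding soft_tree_def by blast

lemma mat_pow_eq_0:
  assumes "soft_tree N M A" "x < N" "x < v + k"
  shows "mat_pow N A k v x = 0"
  using assms(2,3)
proof (induction k arbitrary: x)
  case 0
  then show ?case by simp
next
  case (Suc k)
  have "mat_pow N A k v j * A j x = 0" if "j < N" for j
  proof (cases "j < x")
    case True
    then show ?thesis using Suc.IH[of j] Suc.prems that by simp
  next
    case False
    then show ?thesis using soft_tree_strictly_upper[OF assms(1) that Suc.prems(1)] by simp
  qed
  then show ?case unfolding mat_pow.simps mat_mult_def by (intro sum.neutral) simp
qed

lemma alpha_eq_finite_sum:
  assumes "soft_tree N M A" "x < N" "N \<le> K"
  shows "alpha N A v x = (\<Sum>k<K. mat_pow N A k v x)"
  unfolding alpha_def
  using assms by (intro suminf_finite) (auto intro: mat_pow_eq_0)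

lemma alpha_unfold:
  assumes "soft_tree N M A" "x < N"
  shows "alpha N A v x = of_bool (v = x) + (\<Sum>j<N. alpha N A v j * A j x)"
proof -
  have "alpha N A v x = mat_pow N A 0 v x + (\<Sum>k<N. mat_pow N A (Suc k) v x)"
    using alpha_eq_finite_sum[OF assms, of "Suc N"] by (simp only: sum.lessThan_Suc_shift)
  also have "(\<Sum>k<N. mat_pow N A (Suc k) v x) = (\<Sum>j<N. \<Sum>k<N. mat_pow N A k v j * A j x)"
    unfolding mat_pow.simps mat_mult_def by (rule sum.swap)
  also have "\<dots> = (\<Sum>j<N. alpha N A v j * A j x)"
    using alpha_eq_finite_sum[OF assms(1) _ order_refl] by (simp add: sum_distrib_right)
  finally show ?thesis by simp
qed

lemma alpha_leaf_row:
  assumes "soft_tree N M A" "M \<le> v" "v < N" "x < N"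
  shows "alpha N A v x = of_bool (v = x)"
  using assms(4)
proof (induction x rule: less_induct)
  case (less x)
  have "alpha N A v j * A j x = 0" if "j < N" for j
  proof (cases "j < x")
    case True
    then show ?thesis
      using less.IH[of j] soft_tree_leaf_row[OF assms(1-3)] that less.prems by auto
  next
    case False
    then show ?thesis using soft_tree_strictly_upper[OF assms(1) that less.prems] by simp
  qed
  then have "(\<Sum>j<N. alpha N A v j * A j x) = 0"
    by (intro sum.neutral) simp
  then show ?case using alpha_unfold[OF assms(1) less.prems] by simp
qed

definition transport_cost :: "nat \<Rightarrow> (nat \<Rightarrow> nat \<Rightarrow> real) \<Rightarrow> (nat \<Rightarrow> nat \<Rightarrow> real) \<Rightarrow> real" where
  "transport_cost n d \<pi> = (\<Sum>a<n. \<Sum>b<n. d a b * \<pi> a b)"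

lemma couplings_transpose:
  "\<pi> \<in> couplings n \<mu> \<nu> \<Longrightarrow> (\<lambda>a b. \<pi> b a) \<in> couplings n \<nu> \<mu>"
  unfolding couplings_def by simp

lemma transport_cost_transpose:
  assumes "\<And>a b. d b a = d a b"
  shows "transport_cost n d (\<lambda>a b. \<pi> b a) = transport_cost n d \<pi>"
  unfolding transport_cost_def by (subst sum.swap) (simp add: assms)

lemma abs_sum_diff_le_transport_cost:
  assumes "\<pi> \<in> couplings n \<mu> \<nu>"
  shows "\<bar>\<Sum>x<n. f x * (\<mu> x - \<nu> x)\<bar> \<le> transport_cost n (\<lambda>a b. \<bar>f a - f b\<bar>) \<pi>"
proof -
  have nonneg: "\<And>a b. a < n \<Longrightarrow> b < n \<Longrightarrow> 0 \<le> \<pi> a b"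
    and rows: "\<And>a. a < n \<Longrightarrow> (\<Sum>b<n. \<pi> a b) = \<mu> a"
    and cols: "\<And>b. b < n \<Longrightarrow> (\<Sum>a<n. \<pi> a b) = \<nu> b"
    using assms unfolding couplings_def by auto
  have "(\<Sum>x<n. f x * (\<mu> x - \<nu> x)) = (\<Sum>a<n. f a * \<mu> a) - (\<Sum>b<n. f b * \<nu> b)"
    by (simp add: right_diff_distrib sum_subtractf)
  also have "\<dots> = (\<Sum>a<n. \<Sum>b<n. f a * \<pi> a b) - (\<Sum>b<n. \<Sum>a<n. f b * \<pi> a b)"
    by (intro arg_cong2[where f = minus] sum.cong refl)
      (simp_all add: rows cols flip: sum_distrib_left)
  also have "\<dots> = (\<Sum>a<n. \<Sum>b<n. (f a - f b) * \<pi> a b)"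
    by (subst (2) sum.swap) (simp add: left_diff_distrib sum_subtractf)
  finally have "\<bar>\<Sum>x<n. f x * (\<mu> x - \<nu> x)\<bar> = \<bar>\<Sum>a<n. \<Sum>b<n. (f a - f b) * \<pi> a b\<bar>"
    by simp
  also have "\<dots> \<le> (\<Sum>a<n. \<bar>\<Sum>b<n. (f a - f b) * \<pi> a b\<bar>)"
    by (rule sum_abs)
  also have "\<dots> \<le> (\<Sum>a<n. \<Sum>b<n. \<bar>(f a - f b) * \<pi> a b\<bar>)"
    by (intro sum_mono sum_abs)
  also have "\<dots> = transport_cost n (\<lambda>a b. \<bar>f a - f b\<bar>) \<pi>"
    unfolding transport_cost_def by (intro sum.cong refl) (simp add: abs_mult nonneg)
  finally show ?thesis .
qed

lemma exists_minorant_with_sum: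
  fixes r :: "nat \<Rightarrow> real"
  assumes r: "\<forall>b<n. 0 \<le> r b" and e: "0 \<le> e" "e \<le> (\<Sum>b<n. r b)"
  shows "\<exists>q. (\<forall>b<n. 0 \<le> q b \<and> q b \<le> r b) \<and> (\<Sum>b<n. q b) = e"
proof (cases "(\<Sum>b<n. r b) = 0")
  case True
  then show ?thesis using e r by (intro exI[of _ "\<lambda>_. 0"]) simp
next
  case False
  define t where "t = e / (\<Sum>b<n. r b)"
  have "0 \<le> (\<Sum>b<n. r b)"
    using r by (intro sum_nonneg) simp
  then have "0 \<le> t" "t \<le> 1"
    using False e unfolding t_def by simp_all
  then have "\<forall>b<n. 0 \<le> r b * t \<and> r b * t \<le> r b"
    using r by (simp add: mult_left_le)
  moreover have "(\<Sum>b<n. r b * t) = e"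
    using False unfolding t_def sum_distrib_right[symmetric] by simp
  ultimately show ?thesis by (intro exI[of _ "\<lambda>b. r b * t"]) simp
qed

lemma sum_fun_upd_add:
  assumes "finite S" "p \<in> S"
  shows "(\<Sum>x\<in>S. (f(p := f p + e)) x) = (\<Sum>x\<in>S. f x) + e"
  using assms by (simp add: sum.remove algebra_simps)

text \<open>A coupling on the nodes below \<open>n\<close> of \<open>\<mu>(p := \<mu> p + e)\<close> and \<open>\<nu>\<close> is turned into one
  on the nodes up to \<open>n\<close> of \<open>\<mu>\<close> and \<open>\<nu>\<close>: node \<open>n\<close> keeps the mass \<open>m\<close> and takes over
  the part \<open>q\<close> (of total mass \<open>e\<close>) of what \<open>p\<close> ships.\<close>

definition attach_leaf ::
    "nat \<Rightarrow> nat \<Rightarrow> (nat \<Rightarrow> real) \<Rightarrow> real \<Rightarrow> (nat \<Rightarrow> nat \<Rightarrow> real) \<Rightarrow> nat \<Rightarrow> nat \<Rightarrow> real" where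
  "attach_leaf n p q m \<pi> a b =
     (if b = n then (if a = n then m else 0)
      else if a = n then q b else \<pi> a b - (if a = p then q b else 0))"

lemma attach_leaf_in_couplings:
  assumes \<pi>: "\<pi> \<in> couplings n (\<mu>(p := \<mu> p + e)) \<nu>" and p: "p < n"
    and q: "\<forall>b<n. 0 \<le> q b \<and> q b \<le> \<pi> p b" "(\<Sum>b<n. q b) = e"
    and leaf: "0 \<le> \<nu> n" "\<mu> n = \<nu> n + e"
  shows "attach_leaf n p q (\<nu> n) \<pi> \<in> couplings (Suc n) \<mu> \<nu>"
proof -
  have nonneg: "\<And>a b. a < n \<Longrightarrow> b < n \<Longrightarrow> 0 \<le> \<pi> a b"
    and rows: "\<And>a. a < n \<Longrightarrow> (\<Sum>b<n. \<pi> a b) = (\<mu>(p := \<mu> p + e)) a"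
    and cols: "\<And>b. b < n \<Longrightarrow> (\<Sum>a<n. \<pi> a b) = \<nu> b"
    using \<pi> unfolding couplings_def by auto
  have row_p: "(\<Sum>b<n. if a = p then q b else 0) = (if a = p then e else 0)" for a
    using q(2) by simp
  have col_p: "(\<Sum>a<n. if a = p then q b else 0) = q b" for b
    using p by simp
  show ?thesis
    unfolding couplings_def
  proof (intro CollectI conjI allI impI)
    fix a b assume "a < Suc n" "b < Suc n"
    then show "0 \<le> attach_leaf n p q (\<nu> n) \<pi> a b"
      using nonneg q(1) leaf(1) by (auto simp: attach_leaf_def less_Suc_eq)
  next
    fix a assume "a < Suc n"
    then consider "a < n" | "a = n" by linarith
    then show "(\<Sum>b<Suc n. attach_leaf n p q (\<nu> n) \<pi> a b) = \<mu> a"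
      by cases (simp_all add: attach_leaf_def sum_subtractf rows row_p q(2) leaf(2))
  next
    fix b assume "b < Suc n"
    then consider "b < n" | "b = n" by linarith
    then show "(\<Sum>a<Suc n. attach_leaf n p q (\<nu> n) \<pi> a b) = \<nu> b"
      by cases (simp_all add: attach_leaf_def sum_subtractf cols col_p)
  qed
qed

lemma transport_cost_attach_leaf:
  assumes p: "p < n" and q: "(\<Sum>b<n. q b) = e"
    and d: "\<forall>b<n. d n b = d p b + c" "d n n = 0"
  shows "transport_cost (Suc n) d (attach_leaf n p q m \<pi>) = transport_cost n d \<pi> + c * e"
proof -
  let ?\<pi> = "attach_leaf n p q m \<pi>"
  have row: "(\<Sum>b<Suc n. d a b * ?\<pi> a b)
      = (\<Sum>b<n. d a b * \<pi> a b) - (if a = p then \<Sum>b<n. d p b * q b else 0)" if "a < n" for a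
  proof -
    have "(\<Sum>b<Suc n. d a b * ?\<pi> a b) = (\<Sum>b<n. d a b * ?\<pi> a b)"
      using that by (simp add: attach_leaf_def)
    also have "\<dots> = (\<Sum>b<n. d a b * \<pi> a b - (if a = p then d p b * q b else 0))"
      using that by (intro sum.cong) (auto simp: attach_leaf_def right_diff_distrib)
    finally show ?thesis by (simp add: sum_subtractf)
  qed
  have "transport_cost (Suc n) d ?\<pi> = (\<Sum>a<n. \<Sum>b<Suc n. d a b * ?\<pi> a b) + (\<Sum>b<Suc n. d n b * ?\<pi> n b)"
    by (simp add: transport_cost_def)
  also have "(\<Sum>a<n. \<Sum>b<Suc n. d a b * ?\<pi> a b)
      = (\<Sum>a<n. (\<Sum>b<n. d a b * \<pi> a b) - (if a = p then \<Sum>b<n. d p b * q b else 0))"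
    by (intro sum.cong refl row) simp
  also have "\<dots> = transport_cost n d \<pi> - (\<Sum>b<n. d p b * q b)"
    using p by (simp add: sum_subtractf transport_cost_def)
  also have "(\<Sum>b<Suc n. d n b * ?\<pi> n b) = (\<Sum>b<n. d p b * q b + c * q b)"
    using d by (simp add: attach_leaf_def distrib_right)
  also have "\<dots> = (\<Sum>b<n. d p b * q b) + c * e"
    by (simp add: sum.distrib q flip: sum_distrib_left)
  finally show ?thesis by simp
qed

lemma exists_coupling_attach_leaf:
  assumes \<pi>: "\<pi> \<in> couplings n (\<mu>(p := \<mu> p + e)) \<nu>" and p: "p < n"
    and masses: "0 \<le> e" "0 \<le> \<mu> p" "0 \<le> \<nu> n" "\<mu> n = \<nu> n + e"
    and d: "\<forall>b<n. d n b = d p b + c" "d n n = 0"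
  shows "\<exists>\<pi>' \<in> couplings (Suc n) \<mu> \<nu>. transport_cost (Suc n) d \<pi>' = transport_cost n d \<pi> + c * e"
proof -
  have "\<forall>b<n. 0 \<le> \<pi> p b" "(\<Sum>b<n. \<pi> p b) = \<mu> p + e"
    using \<pi> p by (simp_all add: couplings_def)
  then obtain q where q: "\<forall>b<n. 0 \<le> q b \<and> q b \<le> \<pi> p b" "(\<Sum>b<n. q b) = e"
    using exists_minorant_with_sum[of n "\<pi> p" e] masses(1,2) by auto
  show ?thesis
    using transport_cost_attach_leaf[OF p q(2) d, of "\<nu> n" \<pi>]
      attach_leaf_in_couplings[OF \<pi> p q masses(3,4)] by (rule bexI)
qed

lemma path_len_Cons: "path_len A w (x # y # r) = edge_len A w x y + path_len A w (y # r)"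
  unfolding path_len_def by (simp add: sum.lessThan_Suc_shift del: sum.lessThan_Suc)

lemma path_len_snoc:
  assumes "ps \<noteq> []"
  shows "path_len A w (ps @ [y]) = path_len A w ps + edge_len A w (last ps) y"
proof -
  obtain k where k: "length ps = Suc k" using assms by (cases ps) auto
  have "path_len A w (ps @ [y])
      = (\<Sum>i<k. edge_len A w ((ps @ [y]) ! i) ((ps @ [y]) ! Suc i)) + edge_len A w (ps ! k) y"
    unfolding path_len_def using k by (simp add: nth_append)
  also have "(\<Sum>i<k. edge_len A w ((ps @ [y]) ! i) ((ps @ [y]) ! Suc i)) = path_len A w ps"
    unfolding path_len_def using k by (intro sum.cong) (auto simp: nth_append)
  finally show ?thesis using k assms by (simp add: last_conv_nth)
qed

lemma simple_path_snoc:
  assumes path: "simple_path N A a c ps"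
    and edge: "(c, b) \<in> tree_edges N A \<or> (b, c) \<in> tree_edges N A"
    and "b \<notin> set ps" "b < N"
  shows "simple_path N A a b (ps @ [b])"
  unfolding simple_path_def
proof (intro conjI allI impI)
  fix i assume i: "Suc i < length (ps @ [b])"
  show "((ps @ [b]) ! i, (ps @ [b]) ! Suc i) \<in> tree_edges N A
      \<or> ((ps @ [b]) ! Suc i, (ps @ [b]) ! i) \<in> tree_edges N A"
  proof (cases "Suc i < length ps")
    case True
    then show ?thesis using path by (simp add: simple_path_def nth_append)
  next
    case False
    then have "i = length ps - 1" using i by simp
    then have "(ps @ [b]) ! i = c" "(ps @ [b]) ! Suc i = b"
      using i path by (auto simp: simple_path_def nth_append last_conv_nth)
    then show ?thesis using edge by simp
  qed
qed (use path assms(3,4) in \<open>auto simp: simple_path_def\<close>)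

lemma simple_path_Cons:
  assumes path: "simple_path N A c b ps"
    and edge: "(a, c) \<in> tree_edges N A \<or> (c, a) \<in> tree_edges N A"
    and "a \<notin> set ps" "a < N"
  shows "simple_path N A a b (a # ps)"
  unfolding simple_path_def
proof (intro conjI allI impI)
  fix i assume i: "Suc i < length (a # ps)"
  show "((a # ps) ! i, (a # ps) ! Suc i) \<in> tree_edges N A
      \<or> ((a # ps) ! Suc i, (a # ps) ! i) \<in> tree_edges N A"
  proof (cases i)
    case 0
    then show ?thesis using path edge by (auto simp: simple_path_def hd_conv_nth)
  next
    case (Suc j)
    then show ?thesis using path i by (simp add: simple_path_def)
  qed
qed (use path assms(3,4) in \<open>auto simp: simple_path_def\<close>)

lemma simple_path_ConsD:
  assumes "simple_path N A a b (x # y # r)"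
  shows "x = a" "simple_path N A y b (y # r)"
    and "(x, y) \<in> tree_edges N A \<or> (y, x) \<in> tree_edges N A"
proof -
  have adjacent: "\<And>i. Suc i < length (x # y # r) \<Longrightarrow>
      ((x # y # r) ! i, (x # y # r) ! Suc i) \<in> tree_edges N A
      \<or> ((x # y # r) ! Suc i, (x # y # r) ! i) \<in> tree_edges N A"
    using assms unfolding simple_path_def by blast
  show "x = a" using assms by (simp add: simple_path_def)
  show "(x, y) \<in> tree_edges N A \<or> (y, x) \<in> tree_edges N A"
    using adjacent[of 0] by simp
  show "simple_path N A y b (y # r)"
    using assms adjacent[of "Suc _"] by (auto simp: simple_path_def)
qed

lemma finite_simple_path_lengths: "finite {path_len A w ps | ps. simple_path N A a b ps}"
proof -
  have "length ps \<le> N" if "simple_path N A a b ps" for ps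
  proof -
    have "set ps \<subseteq> {..<N}" "distinct ps" using that by (auto simp: simple_path_def)
    then show ?thesis using distinct_card[of ps] card_mono[of "{..<N}" "set ps"] by simp
  qed
  then have "{ps. simple_path N A a b ps} \<subseteq> {ps. set ps \<subseteq> {..<N} \<and> length ps \<le> N}"
    by (auto simp: simple_path_def)
  then have "finite {ps. simple_path N A a b ps}"
    using finite_lists_length_le[of "{..<N}" N] by (auto intro: finite_subset)
  then show ?thesis by (simp add: setcompr_eq_image)
qed

lemma sum_leaf_set_eq_sum_nodes:
  assumes "\<forall>x. x \<notin> leaf_set N M \<longrightarrow> f x = 0"
  shows "(\<Sum>x\<in>leaf_set N M. f x) = (\<Sum>x<N. f x)"
  using assms by (intro sum.mono_neutral_left) (auto simp: leaf_set_def)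

locale rooted_tree =
  fixes N M :: nat and A :: "nat \<Rightarrow> nat \<Rightarrow> real"
  assumes soft: "soft_tree N M A"
    and zero_one: "\<forall>i<N. \<forall>j<N. A i j \<in> {0, 1}"
begin

definition parent :: "nat \<Rightarrow> nat" where
  "parent x = (THE i. i < N \<and> A i x = 1)"

lemma ex1_parent:
  assumes "1 \<le> x" "x < N"
  shows "\<exists>!i. i < N \<and> A i x = 1"
proof -
  have "\<exists>i<N. A i x \<noteq> 0"
    using soft_tree_column_sum[OF soft assms] by (metis sum.neutral lessThan_iff zero_neq_one)
  then have "\<exists>i. i < N \<and> A i x = 1"
    using zero_one assms(2) by fastforce
  moreover have "i = j" if "i < N" "A i x = 1" "j < N" "A j x = 1" for i j
  proof (rule ccontr)
    assume "i \<noteq> j"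
    then have "(\<Sum>k\<in>{i, j}. A k x) \<le> (\<Sum>k<N. A k x)"
      using that soft_tree_nonneg[OF soft _ assms(2)] by (intro sum_mono2) auto
    then show False
      using \<open>i \<noteq> j\<close> that soft_tree_column_sum[OF soft assms] by simp
  qed
  ultimately show ?thesis by blast
qed

lemma
  assumes "1 \<le> x" "x < N"
  shows parent_less_N: "parent x < N"
    and parent_edge: "A (parent x) x = 1"
    and parent_less: "parent x < x"
    and column_eq_parent_indicator: "i < N \<Longrightarrow> A i x = of_bool (i = parent x)"
proof -
  have parent: "parent x < N \<and> A (parent x) x = 1"
    unfolding parent_def by (rule theI') (rule ex1_parent[OF assms])
  then show "parent x < N" "A (parent x) x = 1" by auto
  then show "parent x < x"
    using soft_tree_strictly_upper[OF soft _ assms(2)] by (metis not_less zero_neq_one)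
  show "A i x = of_bool (i = parent x)" if "i < N"
    using that parent ex1_parent[OF assms] zero_one assms(2) by auto
qed

lemma tree_edge_iff: "(i, x) \<in> tree_edges N A \<longleftrightarrow> 1 \<le> x \<and> x < N \<and> i = parent x"
proof
  assume "(i, x) \<in> tree_edges N A"
  then have edge: "i < N" "x < N" "A i x = 1" by (auto simp: tree_edges_def)
  then have "1 \<le> x"
    using soft_tree_strictly_upper[OF soft, of i x] by (cases x) auto
  then show "1 \<le> x \<and> x < N \<and> i = parent x"
    using edge column_eq_parent_indicator[of x i] by auto
next
  assume "1 \<le> x \<and> x < N \<and> i = parent x"
  then show "(i, x) \<in> tree_edges N A"
    using parent_less_N parent_edge by (auto simp: tree_edges_def)
qed

lemma subtree_le: "x \<in> subtree N A v \<Longrightarrow> v \<le> x"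
proof -
  have "(v, x) \<in> (tree_edges N A)\<^sup>* \<Longrightarrow> v \<le> x"
  proof (induction rule: rtrancl_induct)
    case (step y z)
    then show ?case using parent_less[of z] by (auto simp: tree_edge_iff)
  qed simp
  then show "x \<in> subtree N A v \<Longrightarrow> v \<le> x" by (simp add: subtree_def)
qed

lemma subtree_self: "v < N \<Longrightarrow> v \<in> subtree N A v"
  by (simp add: subtree_def)

lemma mem_subtree_iff_parent:
  assumes "1 \<le> x" "x < N"
  shows "x \<in> subtree N A v \<longleftrightarrow> x = v \<or> parent x \<in> subtree N A v"
proof -
  have "(v, x) \<in> (tree_edges N A)\<^sup>* \<longleftrightarrow> x = v \<or> (v, parent x) \<in> (tree_edges N A)\<^sup>*"
    using assms by (auto simp: tree_edge_iff elim: rtranclE intro: rtrancl_into_rtrancl)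
  then show ?thesis using assms parent_less_N by (simp add: subtree_def)
qed

lemma alpha_eq_subtree_indicator:
  assumes "x < N"
  shows "alpha N A v x = of_bool (x \<in> subtree N A v)"
  using assms
proof (induction x rule: less_induct)
  case (less x)
  show ?case
  proof (cases "x = 0")
    case True
    have "(\<Sum>j<N. alpha N A v j * A j x) = 0"
      using soft_tree_strictly_upper[OF soft _ less.prems] True by (intro sum.neutral) simp
    moreover have "x \<in> subtree N A v \<longleftrightarrow> v = x"
      using subtree_le[of x v] subtree_self[of x] less.prems True by auto
    ultimately show ?thesis
      using alpha_unfold[OF soft less.prems] by simp
  next
    case False
    then have x: "1 \<le> x" "x < N" using less.prems by auto
    have "(\<Sum>j<N. alpha N A v j * A j x) = (\<Sum>j<N. alpha N A v j * of_bool (j = parent x))"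
      using column_eq_parent_indicator[OF x] by simp
    also have "\<dots> = (\<Sum>j<N. if j = parent x then alpha N A v j else 0)"
      by (intro sum.cong) auto
    also have "\<dots> = alpha N A v (parent x)"
      using parent_less_N[OF x] by simp
    also have "\<dots> = of_bool (parent x \<in> subtree N A v)"
      using less.IH parent_less[OF x] parent_less_N[OF x] by simp
    finally show ?thesis
      using alpha_unfold[OF soft less.prems] mem_subtree_iff_parent[OF x, of v]
        subtree_le[of "parent x" x] parent_less[OF x] by auto
  qed
qed

end

locale weighted_rooted_tree = rooted_tree +
  fixes w :: "nat \<Rightarrow> real"
  assumes w_nonneg: "\<forall>v<N. 0 \<le> w v"
begin

definition cut_dist :: "nat \<Rightarrow> nat \<Rightarrow> real" where
  "cut_dist a b = (\<Sum>v<N. w v * \<bar>of_bool (a \<in> subtree N A v) - of_bool (b \<in> subtree N A v)\<bar>)"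

lemma cut_dist_commute: "cut_dist b a = cut_dist a b"
  unfolding cut_dist_def by (simp add: abs_minus_commute)

lemma cut_dist_self [simp]: "cut_dist a a = 0"
  unfolding cut_dist_def by simp

lemma cut_dist_triangle: "cut_dist a c \<le> cut_dist a b + cut_dist b c"
proof -
  have "\<bar>p - r\<bar> \<le> \<bar>p - q\<bar> + \<bar>q - r\<bar>" for p q r :: real
    by linarith
  then show ?thesis
    unfolding cut_dist_def sum.distrib[symmetric] distrib_left[symmetric]
    using w_nonneg by (intro sum_mono mult_left_mono) auto
qed

lemma cut_dist_parent:
  assumes "1 \<le> b" "b < N" "a < b"
  shows "cut_dist a b = cut_dist a (parent b) + w b"
proof -
  have "w v * \<bar>of_bool (a \<in> subtree N A v) - of_bool (b \<in> subtree N A v)\<bar>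
      = w v * \<bar>of_bool (a \<in> subtree N A v) - of_bool (parent b \<in> subtree N A v)\<bar>
        + of_bool (v = b) * w b"
    for v
  proof (cases "v = b")
    case True
    then show ?thesis
      using assms subtree_self subtree_le[of a b] subtree_le[of "parent b" b]
        parent_less[OF assms(1,2)] by auto
  next
    case False
    then show ?thesis using mem_subtree_iff_parent[OF assms(1,2), of v] by simp
  qed
  then show ?thesis using assms(2) by (simp add: cut_dist_def sum.distrib)
qed

lemma cut_dist_edge:
  assumes "(a, c) \<in> tree_edges N A \<or> (c, a) \<in> tree_edges N A"
  shows "cut_dist a c = edge_len A w a c"
  using assms
proof
  assume "(a, c) \<in> tree_edges N A"
  then have c: "1 \<le> c" "c < N" and a: "a = parent c" by (auto simp: tree_edge_iff)
  then show ?thesis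
    using cut_dist_parent[OF c, of a] parent_less[OF c] parent_edge[OF c]
    by (simp add: edge_len_def)
next
  assume "(c, a) \<in> tree_edges N A"
  then have a: "1 \<le> a" "a < N" and c: "c = parent a" by (auto simp: tree_edge_iff)
  then have "A a c = 0"
    using soft_tree_strictly_upper[OF soft a(2)] parent_less[OF a] parent_less_N[OF a] by simp
  then show ?thesis
    using cut_dist_parent[OF a, of c] cut_dist_commute[of a c] parent_less[OF a] c
    by (simp add: edge_len_def)
qed

lemma cut_dist_le_path_len: "simple_path N A a b ps \<Longrightarrow> cut_dist a b \<le> path_len A w ps"
proof (induction ps arbitrary: a)
  case Nil
  then show ?case by (simp add: simple_path_def)
next
  case (Cons x r)
  show ?case
  proof (cases r)
    case Nil
    then show ?thesis using Cons.prems by (auto simp: simple_path_def path_len_def)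
  next
    case (Cons y r')
    note path = simple_path_ConsD[OF Cons.prems[unfolded Cons]]
    have "cut_dist a b \<le> cut_dist x y + cut_dist y b"
      using path(1) by (simp add: cut_dist_triangle)
    also have "\<dots> \<le> edge_len A w x y + path_len A w r"
      using cut_dist_edge[OF path(3)] Cons.IH[OF path(2)[folded Cons]] by simp
    finally show ?thesis by (simp add: Cons path_len_Cons)
  qed
qed

text \<open>The bound on the nodes of the path keeps it simple when it is extended by a child.\<close>

lemma exists_simple_path_of_length_cut_dist:
  assumes "a < N" "b < N"
  shows "\<exists>ps. simple_path N A a b ps \<and> path_len A w ps = cut_dist a b \<and> set ps \<subseteq> {..max a b}"
  using assms
proof (induction "a + b" arbitrary: a b rule: less_induct)
  case less
  consider "a = b" | "a < b" | "b < a" by linarith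
  then show ?case
  proof cases
    case 1
    then show ?thesis
      using less.prems by (intro exI[of _ "[a]"]) (simp add: simple_path_def path_len_def)
  next
    case 2
    then have b: "1 \<le> b" "b < N" using less.prems by auto
    obtain ps where ps: "simple_path N A a (parent b) ps"
      "path_len A w ps = cut_dist a (parent b)" "set ps \<subseteq> {..max a (parent b)}"
      using less.hyps[of a "parent b"] parent_less[OF b] parent_less_N[OF b] less.prems by auto
    have "b \<notin> set ps" using ps(3) 2 parent_less[OF b] by auto
    then have "simple_path N A a b (ps @ [b])"
      using simple_path_snoc[OF ps(1)] tree_edge_iff b by auto
    moreover have "path_len A w (ps @ [b]) = cut_dist a b"
      using ps(1,2) path_len_snoc[of ps] cut_dist_parent[OF b 2] parent_edge[OF b]
      by (auto simp: simple_path_def edge_len_def)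
    moreover have "set (ps @ [b]) \<subseteq> {..max a b}" using ps(3) 2 parent_less[OF b] by auto
    ultimately show ?thesis by meson
  next
    case 3
    then have a: "1 \<le> a" "a < N" using less.prems by auto
    obtain ps where ps: "simple_path N A (parent a) b ps"
      "path_len A w ps = cut_dist (parent a) b" "set ps \<subseteq> {..max (parent a) b}"
      using less.hyps[of "parent a" b] parent_less[OF a] parent_less_N[OF a] less.prems by auto
    then obtain r where r: "ps = parent a # r" by (cases ps) (auto simp: simple_path_def)
    have "a \<notin> set ps" using ps(3) 3 parent_less[OF a] by auto
    then have "simple_path N A a b (a # ps)"
      using simple_path_Cons[OF ps(1)] tree_edge_iff a by auto
    moreover have "A a (parent a) = 0"
      using soft_tree_strictly_upper[OF soft a(2) parent_less_N[OF a]] parent_less[OF a] by simp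
    then have "path_len A w (a # ps) = cut_dist a b"
      using ps(2) r path_len_Cons cut_dist_parent[OF a 3] cut_dist_commute
      by (simp add: edge_len_def)
    moreover have "set (a # ps) \<subseteq> {..max a b}" using ps(3) 3 parent_less[OF a] by auto
    ultimately show ?thesis by meson
  qed
qed

lemma tree_dist_eq_cut_dist:
  assumes "a < N" "b < N"
  shows "tree_dist N A w a b = cut_dist a b"
  unfolding tree_dist_def
proof (rule Min_eqI[OF finite_simple_path_lengths])
  show "cut_dist a b \<in> {path_len A w ps | ps. simple_path N A a b ps}"
    using exists_simple_path_of_length_cut_dist[OF assms] by force
qed (auto intro: cut_dist_le_path_len)

text \<open>For \<open>n = N\<close> this is \<open>\<Sum>\<^sub>v w\<^sub>v \<bar>\<mu>(\<Gamma>(v)) - \<nu>(\<Gamma>(v))\<bar>\<close>; smaller \<open>n\<close> only count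
  the nodes below \<open>n\<close>, which is what the inductive construction of an optimal coupling needs.\<close>

definition flow_cost :: "nat \<Rightarrow> (nat \<Rightarrow> real) \<Rightarrow> (nat \<Rightarrow> real) \<Rightarrow> real" where
  "flow_cost n \<mu> \<nu> = (\<Sum>v<N. w v * \<bar>\<Sum>x<n. of_bool (x \<in> subtree N A v) * (\<mu> x - \<nu> x)\<bar>)"

lemma flow_cost_commute: "flow_cost n \<nu> \<mu> = flow_cost n \<mu> \<nu>"
proof -
  have "(\<Sum>x<n. of_bool (x \<in> subtree N A v) * (\<nu> x - \<mu> x))
      = - (\<Sum>x<n. of_bool (x \<in> subtree N A v) * (\<mu> x - \<nu> x))" for v
    by (simp add: algebra_simps flip: sum_negf)
  then show ?thesis by (simp add: flow_cost_def)
qed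

lemma transport_cost_cut_dist:
  "transport_cost n cut_dist \<pi>
    = (\<Sum>v<N. w v * transport_cost n
          (\<lambda>a b. \<bar>of_bool (a \<in> subtree N A v) - of_bool (b \<in> subtree N A v)\<bar>) \<pi>)"
proof -
  have "transport_cost n cut_dist \<pi>
      = (\<Sum>a<n. \<Sum>b<n. \<Sum>v<N.
          w v * (\<bar>of_bool (a \<in> subtree N A v) - of_bool (b \<in> subtree N A v)\<bar> * \<pi> a b))"
    by (simp add: transport_cost_def cut_dist_def sum_distrib_right mult.assoc)
  also have "\<dots> = (\<Sum>v<N. \<Sum>a<n. \<Sum>b<n.
      w v * (\<bar>of_bool (a \<in> subtree N A v) - of_bool (b \<in> subtree N A v)\<bar> * \<pi> a b))"
    by (subst sum.swap) (simp only: sum.swap[of _ "{..<n}" "{..<N}"])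
  finally show ?thesis by (simp add: transport_cost_def sum_distrib_left)
qed

lemma flow_cost_le_transport_cost:
  "\<pi> \<in> couplings n \<mu> \<nu> \<Longrightarrow> flow_cost n \<mu> \<nu> \<le> transport_cost n cut_dist \<pi>"
  unfolding flow_cost_def transport_cost_cut_dist
  using w_nonneg by (intro sum_mono mult_left_mono abs_sum_diff_le_transport_cost) auto

lemma flow_cost_attach_leaf:
  assumes n: "1 \<le> n" "n < N" and e: "0 \<le> e" "\<mu> n = \<nu> n + e"
  shows "flow_cost (Suc n) \<mu> \<nu> = flow_cost n (\<mu>(parent n := \<mu> (parent n) + e)) \<nu> + w n * e"
proof -
  define S where "S v = (\<Sum>x<n. of_bool (x \<in> subtree N A v) * (\<mu> x - \<nu> x))" for v
  have moved: "(\<Sum>x<n. of_bool (x \<in> subtree N A v) * ((\<mu>(parent n := \<mu> (parent n) + e)) x - \<nu> x))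
      = S v + of_bool (parent n \<in> subtree N A v) * e" for v
  proof -
    have "(\<Sum>x<n. of_bool (x \<in> subtree N A v) * ((\<mu>(parent n := \<mu> (parent n) + e)) x - \<nu> x))
        = (\<Sum>x<n. of_bool (x \<in> subtree N A v) * (\<mu> x - \<nu> x)
            + of_bool (x = parent n) * (of_bool (parent n \<in> subtree N A v) * e))"
      by (intro sum.cong) (auto simp: algebra_simps)
    then show ?thesis using parent_less[OF n] by (simp add: S_def sum.distrib)
  qed
  have leaf: "w v * \<bar>S v + of_bool (n \<in> subtree N A v) * e\<bar>
      = w v * \<bar>S v + of_bool (parent n \<in> subtree N A v) * e\<bar> + (if v = n then w n * e else 0)" for v
  proof (cases "v = n")
    case True
    have "S n = 0" unfolding S_def using subtree_le by (intro sum.neutral) force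
    then show ?thesis
      using True e(1) subtree_self[OF n(2)] subtree_le[of "parent n" n] parent_less[OF n] by auto
  next
    case False
    then show ?thesis using mem_subtree_iff_parent[OF n, of v] by simp
  qed
  have "\<mu> n - \<nu> n = e" using e(2) by simp
  then have "flow_cost (Suc n) \<mu> \<nu> = (\<Sum>v<N. w v * \<bar>S v + of_bool (n \<in> subtree N A v) * e\<bar>)"
    unfolding flow_cost_def S_def by simp
  also have "\<dots> = (\<Sum>v<N. w v * \<bar>S v + of_bool (parent n \<in> subtree N A v) * e\<bar>) + w n * e"
    unfolding leaf sum.distrib using n(2) by simp
  finally show ?thesis unfolding flow_cost_def moved .
qed

text \<open>Parents have smaller labels, so \<open>n\<close> is a leaf of the tree restricted to the nodes up to
  \<open>n\<close>. Its surplus \<open>e\<close> is moved to its parent, the smaller problem is solved, and \<open>e\<close> is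
  shipped back across the edge above \<open>n\<close>, of length \<open>w n\<close>.\<close>

lemma exists_optimal_coupling_Suc:
  assumes IH: "\<And>\<mu> \<nu>. \<forall>x<n. 0 \<le> \<mu> x \<Longrightarrow> \<forall>x<n. 0 \<le> \<nu> x \<Longrightarrow> (\<Sum>x<n. \<mu> x) = (\<Sum>x<n. \<nu> x) \<Longrightarrow>
      \<exists>\<pi> \<in> couplings n \<mu> \<nu>. transport_cost n cut_dist \<pi> = flow_cost n \<mu> \<nu>"
    and n: "n < N" and nonneg: "\<forall>x<Suc n. 0 \<le> \<mu> x" "\<forall>x<Suc n. 0 \<le> \<nu> x"
    and mass: "(\<Sum>x<Suc n. \<mu> x) = (\<Sum>x<Suc n. \<nu> x)" and excess: "\<nu> n \<le> \<mu> n"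
  shows "\<exists>\<pi> \<in> couplings (Suc n) \<mu> \<nu>. transport_cost (Suc n) cut_dist \<pi> = flow_cost (Suc n) \<mu> \<nu>"
proof (cases "n = 0")
  case True
  then have "\<mu> 0 = \<nu> 0" using mass by simp
  then have "(\<lambda>_ _. \<mu> 0) \<in> couplings (Suc n) \<mu> \<nu>" "flow_cost (Suc n) \<mu> \<nu> = 0"
    using True nonneg by (simp_all add: couplings_def flow_cost_def)
  moreover have "transport_cost (Suc n) cut_dist (\<lambda>_ _. \<mu> 0) = 0"
    using True by (simp add: transport_cost_def)
  ultimately show ?thesis by metis
next
  case False
  then have n1: "1 \<le> n" by simp
  define p e where "p = parent n" and "e = \<mu> n - \<nu> n"
  have p: "p < n" using parent_less[OF n1 n] by (simp add: p_def)
  have "(\<Sum>x<n. (\<mu>(p := \<mu> p + e)) x) = (\<Sum>x<n. \<nu> x)"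
    using mass p sum_fun_upd_add[of "{..<n}" p \<mu> e] by (simp add: e_def)
  then obtain \<pi>' where \<pi>': "\<pi>' \<in> couplings n (\<mu>(p := \<mu> p + e)) \<nu>"
      "transport_cost n cut_dist \<pi>' = flow_cost n (\<mu>(p := \<mu> p + e)) \<nu>"
    using IH[of "\<mu>(p := \<mu> p + e)" \<nu>] nonneg excess p by (force simp: e_def)
  have leaf_dist: "\<forall>b<n. cut_dist n b = cut_dist p b + w n"
    using cut_dist_parent[OF n1 n] cut_dist_commute by (simp add: p_def)
  have masses: "0 \<le> e" "0 \<le> \<mu> p" "0 \<le> \<nu> n" "\<mu> n = \<nu> n + e"
    using excess nonneg p by (simp_all add: e_def)
  have "\<exists>\<pi> \<in> couplings (Suc n) \<mu> \<nu>.
      transport_cost (Suc n) cut_dist \<pi> = transport_cost n cut_dist \<pi>' + w n * e"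
    by (rule exists_coupling_attach_leaf[OF \<pi>'(1) p masses leaf_dist cut_dist_self])
  moreover have "transport_cost n cut_dist \<pi>' + w n * e = flow_cost (Suc n) \<mu> \<nu>"
    using flow_cost_attach_leaf[where \<mu> = \<mu> and \<nu> = \<nu>, OF n1 n masses(1,4), folded p_def] \<pi>'(2)
    by simp
  ultimately show ?thesis by simp
qed

lemma exists_optimal_coupling:
  assumes "n \<le> N" "\<forall>x<n. 0 \<le> \<mu> x" "\<forall>x<n. 0 \<le> \<nu> x" "(\<Sum>x<n. \<mu> x) = (\<Sum>x<n. \<nu> x)"
  shows "\<exists>\<pi> \<in> couplings n \<mu> \<nu>. transport_cost n cut_dist \<pi> = flow_cost n \<mu> \<nu>"
  using assms
proof (induction n arbitrary: \<mu> \<nu>)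
  case 0
  then show ?case by (simp add: couplings_def transport_cost_def flow_cost_def)
next
  case (Suc n)
  have n: "n < N" using Suc.prems(1) by simp
  have step: "\<exists>\<pi> \<in> couplings (Suc n) \<mu>' \<nu>'.
      transport_cost (Suc n) cut_dist \<pi> = flow_cost (Suc n) \<mu>' \<nu>'"
    if "\<forall>x<Suc n. 0 \<le> \<mu>' x" "\<forall>x<Suc n. 0 \<le> \<nu>' x"
      "(\<Sum>x<Suc n. \<mu>' x) = (\<Sum>x<Suc n. \<nu>' x)" "\<nu>' n \<le> \<mu>' n" for \<mu>' \<nu>'
    by (rule exists_optimal_coupling_Suc[OF _ n that]) (use Suc.IH n in simp)
  show ?case
  proof (cases "\<nu> n \<le> \<mu> n")
    case True
    show ?thesis by (rule step[OF Suc.prems(2-4) True])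
  next
    case False
    then obtain \<pi> where "\<pi> \<in> couplings (Suc n) \<nu> \<mu>"
        "transport_cost (Suc n) cut_dist \<pi> = flow_cost (Suc n) \<nu> \<mu>"
      using step[OF Suc.prems(3,2) Suc.prems(4)[symmetric]] by auto
    then show ?thesis
      using couplings_transpose transport_cost_transpose[of cut_dist] cut_dist_commute
        flow_cost_commute by metis
  qed
qed

lemma wasserstein1_eq_flow_cost:
  assumes "\<mu> \<in> leaf_probs N M" "\<nu> \<in> leaf_probs N M"
  shows "wasserstein1 N (tree_dist N A w) \<mu> \<nu> = flow_cost N \<mu> \<nu>"
proof -
  have "(\<Sum>x<N. \<mu> x) = (\<Sum>x<N. \<nu> x)" "\<forall>x<N. 0 \<le> \<mu> x" "\<forall>x<N. 0 \<le> \<nu> x"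
    using assms sum_leaf_set_eq_sum_nodes[of N M \<mu>] sum_leaf_set_eq_sum_nodes[of N M \<nu>]
    by (simp_all add: leaf_probs_def)
  then obtain \<pi> where \<pi>: "\<pi> \<in> couplings N \<mu> \<nu>" "transport_cost N cut_dist \<pi> = flow_cost N \<mu> \<nu>"
    using exists_optimal_coupling[of N \<mu> \<nu>] by auto
  have cost: "transport_cost N (tree_dist N A w) \<pi>' = transport_cost N cut_dist \<pi>'" for \<pi>'
    unfolding transport_cost_def by (intro sum.cong refl) (simp add: tree_dist_eq_cut_dist)
  have "wasserstein1 N (tree_dist N A w) \<mu> \<nu>
      = Inf {transport_cost N cut_dist \<pi>' | \<pi>'. \<pi>' \<in> couplings N \<mu> \<nu>}"
    by (simp add: wasserstein1_def flip: transport_cost_def cost)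
  also have "\<dots> = flow_cost N \<mu> \<nu>"
    using \<pi> flow_cost_le_transport_cost by (intro cInf_eq_minimum) (force, blast)
  finally show ?thesis .
qed

lemma W_relax_eq_flow_cost:
  assumes "\<mu> \<in> leaf_probs N M" "\<nu> \<in> leaf_probs N M"
  shows "W_relax N M w A \<mu> \<nu> = flow_cost N \<mu> \<nu>"
proof -
  have "(\<Sum>x\<in>leaf_set N M. alpha N A v x * (\<mu> x - \<nu> x))
      = (\<Sum>x<N. of_bool (x \<in> subtree N A v) * (\<mu> x - \<nu> x))" for v
  proof -
    have "(\<Sum>x\<in>leaf_set N M. alpha N A v x * (\<mu> x - \<nu> x)) = (\<Sum>x<N. alpha N A v x * (\<mu> x - \<nu> x))"
      using assms by (intro sum_leaf_set_eq_sum_nodes) (simp add: leaf_probs_def)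
    then show ?thesis by (simp add: alpha_eq_subtree_indicator)
  qed
  then show ?thesis by (simp add: W_relax_def flow_cost_def)
qed

lemma flow_cost_eq_subtree_sums:
  "flow_cost N \<mu> \<nu> = (\<Sum>v<N. w v * \<bar>(\<Sum>x\<in>subtree N A v. \<mu> x) - (\<Sum>x\<in>subtree N A v. \<nu> x)\<bar>)"
proof -
  have "{..<N} \<inter> subtree N A v = subtree N A v" for v
    by (auto simp: subtree_def)
  then show ?thesis by (simp add: flow_cost_def sum_subtractf)
qed

end

theorem theorem4:
  fixes N M :: nat and A :: "nat \<Rightarrow> nat \<Rightarrow> real" and w :: "nat \<Rightarrow> real"
  assumes "soft_tree N M A"
    and "\<forall>v<N. 0 < w v"
  shows "metric_on (leaf_probs N M) (W_relax N M w A)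
       \<and> ((\<forall>i<N. \<forall>j<N. A i j \<in> {0, 1}) \<longrightarrow>
          (\<forall>\<mu>\<in>leaf_probs N M. \<forall>\<nu>\<in>leaf_probs N M.
             W_relax N M w A \<mu> \<nu> = wasserstein1 N (tree_dist N A w) \<mu> \<nu>
           \<and> W_relax N M w A \<mu> \<nu> =
               (\<Sum>v<N. w v * \<bar>(\<Sum>x\<in>subtree N A v. \<mu> x) - (\<Sum>x\<in>subtree N A v. \<nu> x)\<bar>)))"
proof (intro conjI impI ballI)
  have "\<forall>x\<in>leaf_set N M. \<exists>v<N. \<forall>y\<in>leaf_set N M. alpha N A v y = of_bool (y = x)"
    using alpha_leaf_row[OF assms(1)] by (auto simp: leaf_set_def)
  then have "metric_on (leaf_probs N M)
      (\<lambda>\<mu> \<nu>. \<Sum>v<N. w v * \<bar>\<Sum>x\<in>leaf_set N M. alpha N A v x * (\<mu> x - \<nu> x)\<bar>)"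
    using assms(2) by (intro metric_on_weighted_abs_sum) (auto simp: leaf_set_def leaf_probs_def)
  then show "metric_on (leaf_probs N M) (W_relax N M w A)"
    unfolding W_relax_def .
next
  fix \<mu> \<nu> assume tree: "\<forall>i<N. \<forall>j<N. A i j \<in> {0, 1}"
    and probs: "\<mu> \<in> leaf_probs N M" "\<nu> \<in> leaf_probs N M"
  interpret weighted_rooted_tree N M A w
    using assms tree by unfold_locales (auto simp: less_imp_le)
  show "W_relax N M w A \<mu> \<nu> = wasserstein1 N (tree_dist N A w) \<mu> \<nu>"
    using W_relax_eq_flow_cost[OF probs] wasserstein1_eq_flow_cost[OF probs] by simp
  show "W_relax N M w A \<mu> \<nu> =
      (\<Sum>v<N. w v * \<bar>(\<Sum>x\<in>subtree N A v. \<mu> x) - (\<Sum>x\<in>subtree N A v. \<nu> x)\<bar>)"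
    using W_relax_eq_flow_cost[OF probs] flow_cost_eq_subtree_sums by simp
qed

end
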